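(* Assume the general single-user setting below, with $T=\tau_n+D_n$. Define $V^l(0)=0$, $$V^l(\tau)=\max_{e\in\mathcal E,\,e>0}\frac{1-[1-\zeta(i^{\min},e)]^{\tau}}{\zeta(i^{\min},e)}\big[-\lambda e+\zeta(i^{\min},e)\beta\big],\quad \tau\ge1,$$ and $V^u(0)=0$, $$V^u(\tau)=\sum_{z=1}^{\tau}\max_{e\in\mathcal E}\Big\{-\lambda e+\zeta(i^{\max},e)\big(\beta-\max\{0,V^l(z-1)\}\big)\Big\},\quad\tau\ge1.$$ Then for every state $i$ and every $1\le\tau\le T$, $$\max\{0,V^l(\tau)\}\le V(0,\tau,i)\le\min\{\beta,V^u(\tau)\}.$$
   Context: General single-user setting (perfect prediction): fix $\beta\ge0$, $\lambda\ge0$ and integers $\tau_n\ge1$, $D_n\ge0$. The channel is a finite-state Markov chain on $\{1,\dots,K\}$ with transition matrix $(P^{i,j})$. $\mathcal E\subset[0,\infty)$ is a finite set of resource levels containing $0$ and at least one positive element. For each state $i$, $\zeta(i,\cdot):\mathcal E\to[0,1]$ with $\zeta(i,0)=0$, $\zeta(i,e)>0$ for $e>0$, and $\zeta(i,\cdot)$ strictly increasing (restriction of a concave strictly increasing function). The states are totally ordered by $\zeta$: for every $i,j$, either $\zeta(i,e)\ge\zeta(j,e)$ for all $e\in\mathcal E$ or $\zeta(i,e)\le\zeta(j,e)$ for all $e\in\mathcal E$; $i^{\max}$ is a state with $\zeta(i^{\max},e)\ge\zeta(i,e)$ for all $i,e$, and $i^{\min}$ a state with $\zeta(i^{\min},e)\le\zeta(i,e)$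 for all $i,e$. The value function is $V(0,0,i)=0$ and, for $1\le\tau\le\tau_n+D_n$, $V(0,\tau,i)=\max_{e\in\mathcal E}\{-\lambda e+\zeta(i,e)\beta+(1-\zeta(i,e))\sum_jP^{i,j}V(0,\tau-1,j)\}$. *)

theory Defs
  imports "HOL-Analysis.Analysis"
begin

text \<open>Value function V(0,tau,i) of the general single-user setting (perfect prediction).
States are 1..K, P is the transition matrix, E the finite set of resource levels,
zeta the success probability function.\<close>

fun Vval :: "nat \<Rightarrow> (nat \<Rightarrow> nat \<Rightarrow> real) \<Rightarrow> real set \<Rightarrow> (nat \<Rightarrow> real \<Rightarrow> real)
    \<Rightarrow> real \<Rightarrow> real \<Rightarrow> nat \<Rightarrow> nat \<Rightarrow> real" where
  "Vval K P E zeta beta lambda 0 i = 0"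
| "Vval K P E zeta beta lambda (Suc t) i =
     Max ((\<lambda>e. - lambda * e + zeta i e * beta
              + (1 - zeta i e) * (\<Sum>j\<in>{1..K}. P i j * Vval K P E zeta beta lambda t j)) ` E)"

definition Vl :: "real set \<Rightarrow> (nat \<Rightarrow> real \<Rightarrow> real) \<Rightarrow> real \<Rightarrow> real \<Rightarrow> nat \<Rightarrow> nat \<Rightarrow> real" where
  "Vl E zeta beta lambda imin t =
     (if t = 0 then 0 else
      Max ((\<lambda>e. (1 - (1 - zeta imin e) ^ t) / zeta imin e * (- lambda * e + zeta imin e * beta))
           ` {e\<in>E. e > 0}))"

definition Vu :: "real set \<Rightarrow> (nat \<Rightarrow> real \<Rightarrow> real) \<Rightarrow> real \<Rightarrow> real \<Rightarrow> nat \<Rightarrow> nat \<Rightarrow> nat \<Rightarrow> real" where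
  "Vu E zeta beta lambda imin imax t =
     (\<Sum>z=1..t. Max ((\<lambda>e. - lambda * e
         + zeta imax e * (beta - max 0 (Vl E zeta beta lambda imin (z - 1)))) ` E))"

end

theory Submission
  imports Defs
begin

text \<open>Rewards lie in \<open>[0,\<beta>]\<close> and \<open>P\<close> is
stochastic, so \<open>0 \<le> V \<le> \<beta>\<close>; a step \<open>\<zeta>\<beta> + (1-\<zeta>)x\<close> of the recursion is then monotone in the
continuation \<open>x\<close> and, as \<open>x \<le> \<beta>\<close>, in the success probability \<open>\<zeta>\<close>. Hence always playing a
fixed effort \<open>e > 0\<close> with the worst probabilities \<open>\<zeta>(i\<^sup>m\<^sup>i\<^sup>n,e)\<close>, whose value is the geometric
sum in \<open>V\<^sup>l\<close>, is a lower bound; and since the continuation is at least \<open>max 0 V\<^sup>l\<close>, the gain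
\<open>-\<lambda>e + \<zeta>(i,e)(\<beta> - x)\<close> of one more step is at most the corresponding summand of \<open>V\<^sup>u\<close>.\<close>

lemma convex_combination_bounds:
  fixes w f :: "'a \<Rightarrow> real"
  assumes "\<And>j. j \<in> S \<Longrightarrow> 0 \<le> w j" "(\<Sum>j\<in>S. w j) = 1"
    and "\<And>j. j \<in> S \<Longrightarrow> a \<le> f j \<and> f j \<le> b"
  shows "a \<le> (\<Sum>j\<in>S. w j * f j) \<and> (\<Sum>j\<in>S. w j * f j) \<le> b"
proof -
  have "(\<Sum>j\<in>S. w j * a) \<le> (\<Sum>j\<in>S. w j * f j)" "(\<Sum>j\<in>S. w j * f j) \<le> (\<Sum>j\<in>S. w j * b)"
    using assms by (auto intro!: sum_mono mult_left_mono)
  moreover have "(\<Sum>j\<in>S. w j * a) = a" "(\<Sum>j\<in>S. w j * b) = b"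
    using assms(2) by (simp_all add: sum_distrib_right[symmetric])
  ultimately show ?thesis by simp
qed

lemma success_step_mono:
  fixes z z' x x' beta :: real
  assumes "z \<le> z'" "z' \<le> 1" "x \<le> x'" "x \<le> beta"
  shows "z * beta + (1 - z) * x \<le> z' * beta + (1 - z') * x'"
proof -
  have "0 \<le> (z' - z) * (beta - x) + (1 - z') * (x' - x)"
    using assms by simp
  then show ?thesis by (simp add: algebra_simps)
qed

lemma geometric_value_Suc:
  fixes z c :: real
  assumes "z \<noteq> 0"
  shows "(1 - (1 - z) ^ Suc s) / z * c = c + (1 - z) * ((1 - (1 - z) ^ s) / z * c)"
  using assms by (simp add: field_simps)

locale single_user =
  fixes K :: nat and P :: "nat \<Rightarrow> nat \<Rightarrow> real" and E :: "real set"
    and zeta :: "nat \<Rightarrow> real \<Rightarrow> real" and beta lambda :: real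
  assumes beta_nonneg: "beta \<ge> 0" and lambda_nonneg: "lambda \<ge> 0"
    and P_nonneg: "\<And>a b. a \<in> {1..K} \<Longrightarrow> b \<in> {1..K} \<Longrightarrow> P a b \<ge> 0"
    and P_stochastic: "\<And>a. a \<in> {1..K} \<Longrightarrow> (\<Sum>b\<in>{1..K}. P a b) = 1"
    and finite_E: "finite E" and E_nonneg: "\<And>e. e \<in> E \<Longrightarrow> 0 \<le> e" and zero_in_E: "0 \<in> E"
    and zeta_range: "\<And>a e. a \<in> {1..K} \<Longrightarrow> e \<in> E \<Longrightarrow> 0 \<le> zeta a e \<and> zeta a e \<le> 1"
    and zeta_zero: "\<And>a. a \<in> {1..K} \<Longrightarrow> zeta a 0 = 0"
begin

abbreviation V :: "nat \<Rightarrow> nat \<Rightarrow> real" where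
  "V \<equiv> Vval K P E zeta beta lambda"

definition continuation :: "nat \<Rightarrow> nat \<Rightarrow> real" where
  "continuation s i = (\<Sum>j\<in>{1..K}. P i j * V s j)"

lemma V_Suc:
  "V (Suc s) i = Max ((\<lambda>e. - lambda * e + zeta i e * beta + (1 - zeta i e) * continuation s i) ` E)"
  by (simp add: continuation_def)

lemma V_Suc_ge: "e \<in> E \<Longrightarrow>
    - lambda * e + zeta i e * beta + (1 - zeta i e) * continuation s i \<le> V (Suc s) i"
  unfolding V_Suc using finite_E by (intro Max_ge) auto

lemma V_Suc_le:
  assumes "\<And>e. e \<in> E \<Longrightarrow> - lambda * e + zeta i e * beta + (1 - zeta i e) * continuation s i \<le> x"
  shows "V (Suc s) i \<le> x"
  unfolding V_Suc using finite_E zero_in_E assms by (subst Max_le_iff) auto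

lemma continuation_bounds:
  assumes "i \<in> {1..K}" "\<And>j. j \<in> {1..K} \<Longrightarrow> a \<le> V s j \<and> V s j \<le> b"
  shows "a \<le> continuation s i \<and> continuation s i \<le> b"
  unfolding continuation_def
  using assms P_nonneg P_stochastic by (intro convex_combination_bounds) auto

lemma V_bounds: "i \<in> {1..K} \<Longrightarrow> 0 \<le> V s i \<and> V s i \<le> beta"
proof (induction s arbitrary: i)
  case 0
  then show ?case using beta_nonneg by simp
next
  case (Suc s)
  have cont: "0 \<le> continuation s i" "continuation s i \<le> beta"
    using continuation_bounds[OF Suc.prems Suc.IH] by auto
  have "0 \<le> - lambda * 0 + zeta i 0 * beta + (1 - zeta i 0) * continuation s i"
    using zeta_zero Suc.prems cont by simp
  also have "\<dots> \<le> V (Suc s) i"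
    using zero_in_E by (rule V_Suc_ge)
  finally have "0 \<le> V (Suc s) i" .
  moreover have "V (Suc s) i \<le> beta"
  proof (rule V_Suc_le)
    fix e assume e: "e \<in> E"
    have "zeta i e * beta + (1 - zeta i e) * continuation s i \<le> 1 * beta + (1 - 1) * beta"
      using zeta_range[OF Suc.prems e] cont by (intro success_step_mono) auto
    then show "- lambda * e + zeta i e * beta + (1 - zeta i e) * continuation s i \<le> beta"
      using mult_nonneg_nonneg[OF lambda_nonneg E_nonneg[OF e]] by simp
  qed
  ultimately show ?case by simp
qed

end

locale ordered_single_user = single_user +
  fixes imin imax :: nat
  assumes imin: "\<And>a e. a \<in> {1..K} \<Longrightarrow> e \<in> E \<Longrightarrow> zeta imin e \<le> zeta a e"
    and imax: "\<And>a e. a \<in> {1..K} \<Longrightarrow> e \<in> E \<Longrightarrow> zeta a e \<le> zeta imax e"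
    and positive_effort: "\<exists>e\<in>E. 0 < e"
    and zeta_imin_pos: "\<And>e. e \<in> E \<Longrightarrow> 0 < e \<Longrightarrow> 0 < zeta imin e"
begin

abbreviation Vlow :: "nat \<Rightarrow> real" where
  "Vlow \<equiv> Vl E zeta beta lambda imin"

abbreviation Vup :: "nat \<Rightarrow> real" where
  "Vup \<equiv> Vu E zeta beta lambda imin imax"

lemma fixed_effort_le_V:
  assumes e: "e \<in> E" "0 < e"
  shows "i \<in> {1..K} \<Longrightarrow>
    (1 - (1 - zeta imin e) ^ s) / zeta imin e * (- lambda * e + zeta imin e * beta) \<le> V s i"
proof (induction s arbitrary: i)
  case 0
  then show ?case by simp
next
  case (Suc s)
  define z where "z = zeta imin e"
  define W where "W = (1 - (1 - z) ^ s) / z * (- lambda * e + z * beta)"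
  have W_le_V: "W \<le> V s j \<and> V s j \<le> beta" if "j \<in> {1..K}" for j
    using Suc.IH[OF that] V_bounds[OF that] by (simp add: W_def z_def)
  have "W \<le> beta"
    using W_le_V[OF Suc.prems] by simp
  have "z \<noteq> 0"
    using zeta_imin_pos[OF e] by (simp add: z_def)
  have "(1 - (1 - z) ^ Suc s) / z * (- lambda * e + z * beta)
      = - lambda * e + (z * beta + (1 - z) * W)"
    unfolding W_def geometric_value_Suc[OF \<open>z \<noteq> 0\<close>] by simp
  also have "\<dots> \<le> - lambda * e + (zeta i e * beta + (1 - zeta i e) * continuation s i)"
    using imin[OF Suc.prems e(1)] zeta_range[OF Suc.prems e(1)] \<open>W \<le> beta\<close>
      continuation_bounds[OF Suc.prems W_le_V]
    by (simp add: z_def success_step_mono)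
  also have "\<dots> \<le> V (Suc s) i"
    using V_Suc_ge[OF e(1), of i s] by linarith
  finally show ?case by (simp add: z_def)
qed

lemma Vl_le_V:
  assumes i: "i \<in> {1..K}"
  shows "max 0 (Vlow s) \<le> V s i"
proof -
  have "Vlow s \<le> V s i"
  proof (cases "s = 0")
    case True
    then show ?thesis using V_bounds[OF i] by (auto simp: Vl_def)
  next
    case False
    then show ?thesis
      unfolding Vl_def using finite_E positive_effort fixed_effort_le_V[OF _ _ i]
      by (auto intro!: Max.boundedI)
  qed
  then show ?thesis using V_bounds[OF i] by simp
qed

lemma Vu_Suc:
  "Vup (Suc s) = Vup s + Max ((\<lambda>e. - lambda * e + zeta imax e * (beta - max 0 (Vlow s))) ` E)"
  by (simp add: Vu_def)

lemma V_le_Vu: "i \<in> {1..K} \<Longrightarrow> V s i \<le> Vup s"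
proof (induction s arbitrary: i)
  case 0
  then show ?case by (simp add: Vu_def)
next
  case (Suc s)
  let ?gain = "\<lambda>e. - lambda * e + zeta imax e * (beta - max 0 (Vlow s))"
  have cont: "max 0 (Vlow s) \<le> continuation s i" "continuation s i \<le> beta"
    using continuation_bounds[OF Suc.prems, of "max 0 (Vlow s)" s beta] Vl_le_V V_bounds by auto
  have cont_le_Vu: "continuation s i \<le> Vup s"
    using continuation_bounds[OF Suc.prems, of 0 s "Vup s"] Suc.IH V_bounds by auto
  have "V (Suc s) i \<le> Vup s + Max (?gain ` E)"
  proof (rule V_Suc_le)
    fix e assume e: "e \<in> E"
    have zi: "0 \<le> zeta i e" "zeta i e \<le> zeta imax e"
      using zeta_range[OF Suc.prems e] imax[OF Suc.prems e] by auto
    have "zeta i e * (beta - continuation s i) \<le> zeta imax e * (beta - max 0 (Vlow s))"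
      using zi cont by (intro mult_mono) auto
    moreover have "?gain e \<le> Max (?gain ` E)"
      using finite_E e by (intro Max_ge) auto
    ultimately show "- lambda * e + zeta i e * beta + (1 - zeta i e) * continuation s i
        \<le> Vup s + Max (?gain ` E)"
      using cont_le_Vu by (simp add: algebra_simps)
  qed
  then show ?case by (simp add: Vu_Suc)
qed

end

theorem theorem7:
  fixes K :: nat and P :: "nat \<Rightarrow> nat \<Rightarrow> real" and E :: "real set"
    and zeta :: "nat \<Rightarrow> real \<Rightarrow> real" and beta lambda :: real
    and tau_n D_n imax imin i t :: nat
  assumes beta: "beta \<ge> 0" and lambda: "lambda \<ge> 0"
    and taun: "tau_n \<ge> 1"
    and K: "K \<ge> 1"
    and P_nonneg: "\<forall>a\<in>{1..K}. \<forall>b\<in>{1..K}. P a b \<ge> 0"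
    and P_stoch: "\<forall>a\<in>{1..K}. (\<Sum>b\<in>{1..K}. P a b) = 1"
    and E_fin: "finite E" and E_nonneg: "E \<subseteq> {0..}" and E0: "0 \<in> E"
    and E_pos: "\<exists>e\<in>E. e > 0"
    and zeta_range: "\<forall>a\<in>{1..K}. \<forall>e\<in>E. 0 \<le> zeta a e \<and> zeta a e \<le> 1"
    and zeta0: "\<forall>a\<in>{1..K}. zeta a 0 = 0"
    and zeta_pos: "\<forall>a\<in>{1..K}. \<forall>e\<in>E. e > 0 \<longrightarrow> zeta a e > 0"
    and zeta_mono: "\<forall>a\<in>{1..K}. strict_mono_on E (zeta a)"
    and zeta_concave: "\<forall>a\<in>{1..K}. \<exists>g. concave_on {0..} g \<and> strict_mono_on {0..} g
                          \<and> (\<forall>e\<in>E. zeta a e = g e)"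
    and total: "\<forall>a\<in>{1..K}. \<forall>b\<in>{1..K}.
                  (\<forall>e\<in>E. zeta a e \<ge> zeta b e) \<or> (\<forall>e\<in>E. zeta a e \<le> zeta b e)"
    and imax: "imax \<in> {1..K}" "\<forall>a\<in>{1..K}. \<forall>e\<in>E. zeta imax e \<ge> zeta a e"
    and imin: "imin \<in> {1..K}" "\<forall>a\<in>{1..K}. \<forall>e\<in>E. zeta imin e \<le> zeta a e"
    and i: "i \<in> {1..K}"
    and t: "1 \<le> t" "t \<le> tau_n + D_n"
  shows "max 0 (Vl E zeta beta lambda imin t) \<le> Vval K P E zeta beta lambda t i
       \<and> Vval K P E zeta beta lambda t i \<le> min beta (Vu E zeta beta lambda imin imax t)"
proof -
  interpret ordered_single_user K P E zeta beta lambda imin imax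
    using assms by unfold_locales auto
  show ?thesis
    using Vl_le_V[OF i] V_bounds[OF i] V_le_Vu[OF i] by simp
qed

end
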